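(* Let $X$ be a metric space and $x\in X$. Assume (a) there exist constants $c\ge1$, $a\in(0,1]$ such that for all $r\le a$, $\lambda,\mu\le1$ and $y,z\in B_X(x,r)$, $n(\lambda\mu r,B_X(y,\lambda r))\le c\,n(\lambda\mu r,B_X(z,\lambda r))$; and (b) $\limsup_{r\to0}n_{\lambda r}(\overline{B}_X(x,r))<\infty$ for all $\lambda>0$. Define $g(t,h)=\log n(e^{-(t+h)},B_X(x,e^{-t}))$ and $dg(t,h,k)=g(t,h+k)-g(t+h,k)-g(t,h)$. Then there is $t_0$ such that $dg$ is bounded on $\{(t,h,k):t>t_0,\ h,k>0\}$.
   Context: $B_X(x,r)$ is the open ball, $\overline{B}_X(x,r)$ the closed ball; $n(s,A)=n_s(A)$ is the minimum number of open balls of radius $s$ needed to cover $A$. *)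

theory Defs
  imports "HOL-Analysis.Analysis"
begin

definition cover_num :: "real \<Rightarrow> 'a::metric_space set \<Rightarrow> enat" where
  "cover_num s A = (INF C \<in> {C. finite C \<and> A \<subseteq> (\<Union>c\<in>C. ball c s)}. enat (card C))"

definition g_fun :: "'a::metric_space \<Rightarrow> real \<Rightarrow> real \<Rightarrow> real" where
  "g_fun x t h = ln (real (the_enat (cover_num (exp (-(t+h))) (ball x (exp (-t))))))"

definition dg_fun :: "'a::metric_space \<Rightarrow> real \<Rightarrow> real \<Rightarrow> real \<Rightarrow> real" where
  "dg_fun x t h k = g_fun x t (h+k) - g_fun x (t+h) k - g_fun x t h"

end

theory Submission
  imports Defs
begin

text \<open>Write \<open>N(s, r)\<close> for the number of \<open>s\<close>-balls needed to cover \<open>B(x, r)\<close>. With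
  \<open>R = exp (-t)\<close>, \<open>s1 = exp (-(t+h))\<close> and \<open>s2 = exp (-(t+h+k))\<close>, \<open>dg\<close> is
  \<open>log N(s2, R) - log (N(s1, R) N(s2, s1))\<close>, so it suffices to show that these two numbers
  agree up to constant factors once \<open>R\<close> is small. Covering \<open>B(x, R)\<close> by \<open>N(s1, R)\<close> balls of
  radius \<open>s1\<close>, and each of those, by the homogeneity hypothesis (a), by \<open>c N(s2, s1)\<close> balls of
  radius \<open>s2\<close> gives one inequality. For the other, take a maximal \<open>3 s1\<close>-separated set \<open>P\<close> in
  \<open>B(x, R/2)\<close>: no \<open>s2\<close>-ball meets two of the balls \<open>B(p, s1)\<close>, \<open>p \<in> P\<close>, whence
  \<open>|P| N(s2, s1) \<le> c N(s2, R)\<close>; and as the balls \<open>B(p, 3 s1)\<close> cover \<open>B(x, R/2)\<close>, hypotheses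
  (a) and (b) give \<open>N(s1, R) \<le> const |P|\<close>. Hypothesis (b) also makes all these covering
  numbers finite and settles the degenerate cases \<open>R < 6 s1\<close> and \<open>s1 < 2 s2\<close>.\<close>

lemma cover_num_le_card:
  assumes "finite C" "A \<subseteq> (\<Union>c\<in>C. ball c s)"
  shows "cover_num s A \<le> enat (card C)"
  unfolding cover_num_def using assms by (auto intro!: INF_lower2[of C])

lemma cover_num_attained:
  assumes "cover_num s A \<noteq> \<infinity>"
  obtains C where "finite C" "A \<subseteq> (\<Union>c\<in>C. ball c s)" "enat (card C) = cover_num s A"
proof -
  let ?covers = "{C. finite C \<and> A \<subseteq> (\<Union>c\<in>C. ball c s)}"
  have "?covers \<noteq> {}"
  proof
    assume "?covers = {}"
    then have "cover_num s A = \<infinity>"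
      unfolding cover_num_def by (simp only: image_empty Inf_empty top_enat_def)
    with assms show False by simp
  qed
  then obtain C0 where "C0 \<in> ?covers" by blast
  then have "cover_num s A \<in> (\<lambda>C. enat (card C)) ` ?covers"
    unfolding cover_num_def by (intro wellorder_InfI[of "enat (card C0)"]) blast
  then obtain C where "C \<in> ?covers" "cover_num s A = enat (card C)" by (rule imageE)
  with that[of C] show thesis by simp
qed

lemma cover_num_mono: "A \<subseteq> B \<Longrightarrow> cover_num s A \<le> cover_num s B"
  unfolding cover_num_def by (intro INF_mono) auto

lemma cover_num_antimono: "s \<le> s' \<Longrightarrow> cover_num s' A \<le> cover_num s A"
  unfolding cover_num_def by (intro INF_mono) (force intro: ball_subset_ball_iff)

lemma cover_num_ge_1: "A \<noteq> {} \<Longrightarrow> 1 \<le> cover_num s A"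
  unfolding cover_num_def
  by (intro INF_greatest) (auto simp: Suc_le_eq card_gt_0_iff one_enat_def)

lemma cover_num_UN_le_sum:
  assumes "finite Y" "A \<subseteq> (\<Union>y\<in>Y. B y)"
  shows "cover_num s A \<le> (\<Sum>y\<in>Y. cover_num s (B y))"
proof (cases "\<exists>y\<in>Y. cover_num s (B y) = \<infinity>")
  case True
  then obtain y0 where "y0 \<in> Y" "cover_num s (B y0) = \<infinity>" by blast
  then have "(\<Sum>y\<in>Y. cover_num s (B y)) = \<infinity>"
    using assms(1) by (simp add: sum.remove)
  then show ?thesis by simp
next
  case False
  then have "\<forall>y\<in>Y. \<exists>C. finite C \<and> B y \<subseteq> (\<Union>c\<in>C. ball c s) \<and> enat (card C) = cover_num s (B y)"
    by (metis cover_num_attained)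
  then obtain C where C: "\<And>y. y \<in> Y \<Longrightarrow> finite (C y)" "\<And>y. y \<in> Y \<Longrightarrow> B y \<subseteq> (\<Union>c\<in>C y. ball c s)"
    "\<And>y. y \<in> Y \<Longrightarrow> enat (card (C y)) = cover_num s (B y)"
    by metis
  have "cover_num s A \<le> enat (card (\<Union>y\<in>Y. C y))"
  proof (rule cover_num_le_card)
    show "finite (\<Union>y\<in>Y. C y)" using assms(1) C(1) by blast
    show "A \<subseteq> (\<Union>c\<in>(\<Union>y\<in>Y. C y). ball c s)" using assms(2) C(2) by blast
  qed
  also have "\<dots> \<le> enat (\<Sum>y\<in>Y. card (C y))"
    using card_UN_le[OF assms(1)] by simp
  also have "\<dots> = (\<Sum>y\<in>Y. cover_num s (B y))"
    using C(3) by (simp add: of_nat_eq_enat[symmetric])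
  finally show ?thesis .
qed

lemma card_separated_le_card_cover:
  assumes "finite Z" "A \<subseteq> (\<Union>z\<in>Z. ball z (d/2))"
    and "P \<subseteq> A" "pairwise (\<lambda>p q. d \<le> dist p q) P"
  shows "finite P \<and> card P \<le> card Z"
proof -
  have "\<forall>p\<in>P. \<exists>z\<in>Z. p \<in> ball z (d/2)" using assms(2,3) by (simp add: subset_eq)
  then obtain f where f: "\<And>p. p \<in> P \<Longrightarrow> f p \<in> Z \<and> p \<in> ball (f p) (d/2)" by metis
  have "inj_on f P"
  proof (rule inj_onI)
    fix p q assume pq: "p \<in> P" "q \<in> P" "f p = f q"
    have "dist p q \<le> dist (f p) p + dist (f p) q" by (rule dist_triangle3)
    also have "\<dots> < d" using f[of p] f[of q] pq by auto
    finally show "p = q" using assms(4) pq(1,2) unfolding pairwise_def by force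
  qed
  moreover have "f ` P \<subseteq> Z" using f by blast
  ultimately show ?thesis
    using assms(1) by (meson card_inj_on_le finite_imageD finite_subset)
qed

lemma separated_net_exists:
  assumes "cover_num (d/2) A \<noteq> \<infinity>"
  obtains P where "finite P" "P \<subseteq> A" "pairwise (\<lambda>p q. d \<le> dist p q) P"
    "A \<subseteq> (\<Union>p\<in>P. ball p d)"
proof -
  define separated where "separated P \<longleftrightarrow> P \<subseteq> A \<and> pairwise (\<lambda>p q. d \<le> dist p q) P" for P
  obtain Z where Z: "finite Z" "A \<subseteq> (\<Union>z\<in>Z. ball z (d/2))"
    using cover_num_attained[OF assms] .
  have card_le: "finite P \<and> card P \<le> card Z" if "separated P" for P
    using card_separated_le_card_cover[OF Z] that unfolding separated_def by blast
  have "\<exists>P. separated P \<and> (\<forall>P'. separated P' \<longrightarrow> card P' \<le> card P)"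
  proof (rule Lattices_Big.ex_has_greatest_nat)
    show "separated {}" unfolding separated_def by simp
    show "\<forall>P. separated P \<longrightarrow> card P < Suc (card Z)" using card_le by (simp add: less_Suc_eq_le)
  qed
  then obtain P where P: "separated P" and P_max: "\<And>P'. separated P' \<Longrightarrow> card P' \<le> card P"
    by blast
  have covers: "A \<subseteq> (\<Union>p\<in>P. ball p d)"
  proof
    fix q assume q: "q \<in> A"
    show "q \<in> (\<Union>p\<in>P. ball p d)"
    proof (rule ccontr)
      assume far: "q \<notin> (\<Union>p\<in>P. ball p d)"
      from q Z(2) obtain z where "dist z q < d/2" by auto
      then have "0 < d" using zero_le_dist[of z q] by linarith
      with far have "q \<notin> P" by force
      moreover have "separated (insert q P)"
        using P q far unfolding separated_def by (auto simp: pairwise_insert dist_commute)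
      ultimately show False
        using P_max[of "insert q P"] card_le[OF P] by simp
    qed
  qed
  show thesis
  proof (rule that)
    show "finite P" using card_le[OF P] by simp
    show "P \<subseteq> A" "pairwise (\<lambda>p q. d \<le> dist p q) P"
      using P unfolding separated_def by auto
  qed (fact covers)
qed

lemma sum_cover_num_separated_le:
  assumes "finite P" "\<And>p. p \<in> P \<Longrightarrow> B p \<subseteq> A"
    and "\<And>p q u v. p \<in> P \<Longrightarrow> q \<in> P \<Longrightarrow> p \<noteq> q \<Longrightarrow> u \<in> B p \<Longrightarrow> v \<in> B q \<Longrightarrow> 2 * s \<le> dist u v"
  shows "(\<Sum>p\<in>P. cover_num s (B p)) \<le> cover_num s A"
proof (cases "cover_num s A = \<infinity>")
  case False
  then obtain Q where Q: "finite Q" "A \<subseteq> (\<Union>q\<in>Q. ball q s)" "enat (card Q) = cover_num s A"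
    by (rule cover_num_attained)
  define meeting where "meeting p = {q\<in>Q. ball q s \<inter> B p \<noteq> {}}" for p
  have finite_meeting: "finite (meeting p)" for p
    using Q(1) unfolding meeting_def by simp
  have "cover_num s (B p) \<le> enat (card (meeting p))" if "p \<in> P" for p
  proof (rule cover_num_le_card[OF finite_meeting])
    show "B p \<subseteq> (\<Union>q\<in>meeting p. ball q s)"
      using Q(2) assms(2)[OF that] unfolding meeting_def by blast
  qed
  then have "(\<Sum>p\<in>P. cover_num s (B p)) \<le> (\<Sum>p\<in>P. enat (card (meeting p)))"
    by (rule sum_mono)
  also have "\<dots> = enat (card (\<Union>p\<in>P. meeting p))"
  proof -
    have "meeting p \<inter> meeting p' = {}" if "p \<in> P" "p' \<in> P" "p \<noteq> p'" for p p'
    proof (rule ccontr)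
      assume "meeting p \<inter> meeting p' \<noteq> {}"
      then obtain q u v where "dist q u < s" "u \<in> B p" "dist q v < s" "v \<in> B p'"
        unfolding meeting_def by auto
      moreover have "dist u v \<le> dist q u + dist q v" by (rule dist_triangle3)
      ultimately show False using assms(3)[OF that] by force
    qed
    then show ?thesis
      using assms(1) finite_meeting by (simp add: card_UN_disjoint of_nat_eq_enat[symmetric])
  qed
  also have "\<dots> \<le> enat (card Q)"
    using Q(1) unfolding meeting_def by (intro enat_ord_simps(1)[THEN iffD2] card_mono) auto
  finally show ?thesis using Q(3) by simp
qed simp

lemma ennreal_of_enat_eq_ennreal_the_enat:
  "n \<noteq> \<infinity> \<Longrightarrow> ennreal_of_enat n = ennreal (real (the_enat n))"
  by (cases n) (auto simp: ennreal_of_nat_eq_real_of_nat)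

lemma abs_ln_diff_le:
  fixes u v C D :: real
  assumes "0 < u" "0 < v" "1 \<le> C" "1 \<le> D" "u \<le> C * v" "v \<le> D * u"
  shows "\<bar>ln u - ln v\<bar> \<le> ln C + ln D"
proof -
  have "ln u \<le> ln (C * v)" "ln v \<le> ln (D * u)"
    using assms by simp_all
  then have "ln u \<le> ln C + ln v" "ln v \<le> ln D + ln u"
    using assms by (simp_all add: ln_mult)
  moreover have "0 \<le> ln C" "0 \<le> ln D"
    using assms by simp_all
  ultimately show ?thesis
    unfolding abs_le_iff by linarith
qed

lemma ennreal_of_enat_less_top_iff: "ennreal_of_enat n < top \<longleftrightarrow> n \<noteq> \<infinity>"
  by (cases n) (auto simp: of_nat_less_top)

lemma Limsup_less_top_imp_eventually_bounded:
  fixes f :: "'a \<Rightarrow> ennreal"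
  assumes "Limsup F f < \<infinity>"
  obtains M :: real where "eventually (\<lambda>y. f y \<le> ennreal M) F"
proof -
  have "Limsup F f < ennreal (enn2real (Limsup F f) + 1)"
    using assms by (cases "Limsup F f") (auto simp: ennreal_less_iff)
  then have "eventually (\<lambda>y. f y < ennreal (enn2real (Limsup F f) + 1)) F"
    by (rule Limsup_lessD)
  then show thesis
    by (intro that[of "enn2real (Limsup F f) + 1"]) (auto elim: eventually_mono)
qed

abbreviation cover_count :: "real \<Rightarrow> 'a::metric_space set \<Rightarrow> ennreal"
  where "cover_count s A \<equiv> ennreal_of_enat (cover_num s A)"

definition cover_size :: "real \<Rightarrow> 'a::metric_space set \<Rightarrow> real"
  where "cover_size s A = real (the_enat (cover_num s A))"

text \<open>\<open>M\<close> and \<open>\<delta>\<close> come from hypothesis (b) with \<open>\<lambda> = 1/6\<close>. Homogeneity is needed up to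
  radius \<open>2 \<delta>\<close> because the centres of covering balls meeting \<open>B(x, R)\<close> lie in \<open>B(x, 2 R)\<close>.\<close>

locale homogeneous_covering =
  fixes x :: "'a::metric_space" and c M \<delta> :: real
  assumes c_ge_1: "1 \<le> c" and delta_pos: "0 < \<delta>"
    and homogeneous: "\<And>r l m y z. 0 < r \<Longrightarrow> r \<le> 2 * \<delta> \<Longrightarrow> 0 < l \<Longrightarrow> l \<le> 1 \<Longrightarrow> 0 < m \<Longrightarrow> m \<le> 1 \<Longrightarrow>
      y \<in> ball x r \<Longrightarrow> z \<in> ball x r \<Longrightarrow>
      cover_count (l*m*r) (ball y (l*r)) \<le> ennreal c * cover_count (l*m*r) (ball z (l*r))"
    and small_ball_bound: "\<And>r. 0 < r \<Longrightarrow> r < \<delta> \<Longrightarrow> cover_count (r/6) (cball x r) \<le> ennreal M"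
begin

lemma homogeneous_ball:
  assumes "0 < s" "s \<le> \<sigma>" "\<sigma> \<le> r" "r \<le> 2 * \<delta>" "y \<in> ball x r" "z \<in> ball x r"
  shows "cover_count s (ball y \<sigma>) \<le> ennreal c * cover_count s (ball z \<sigma>)"
proof -
  have "\<sigma>/r * (s/\<sigma>) * r = s" "\<sigma>/r * r = \<sigma>" using assms by auto
  with homogeneous[of r "\<sigma>/r" "s/\<sigma>" y z] assms show ?thesis by simp
qed

lemma cover_count_le_card_mult:
  assumes "A \<subseteq> ball x R" "finite Y" "A \<subseteq> (\<Union>y\<in>Y. ball y \<sigma>)"
    and "0 < s" "s \<le> \<sigma>" "\<sigma> \<le> R" "R \<le> \<delta>"
  shows "cover_count s A \<le> of_nat (card Y) * ennreal c * cover_count s (ball x \<sigma>)"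
proof -
  define Y' where "Y' = {y\<in>Y. ball y \<sigma> \<inter> A \<noteq> {}}"
  have "finite Y'" "card Y' \<le> card Y"
    using assms(2) unfolding Y'_def by (auto intro: card_mono)
  have "A \<subseteq> (\<Union>y\<in>Y'. ball y \<sigma>)"
  proof
    fix w assume "w \<in> A"
    with assms(3) obtain y where "y \<in> Y" "w \<in> ball y \<sigma>" by (auto simp del: mem_ball)
    with \<open>w \<in> A\<close> show "w \<in> (\<Union>y\<in>Y'. ball y \<sigma>)" unfolding Y'_def by (auto simp del: mem_ball)
  qed
  have near: "cover_count s (ball y \<sigma>) \<le> ennreal c * cover_count s (ball x \<sigma>)" if y: "y \<in> Y'" for y
  proof -
    obtain w where "w \<in> A" "w \<in> ball y \<sigma>" using y unfolding Y'_def by (auto simp del: mem_ball)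
    then have "y \<in> ball x (2 * R)"
      using assms(1,6) dist_triangle[of x y w] by (auto simp: dist_commute subset_eq)
    then show ?thesis using assms by (intro homogeneous_ball[where r="2 * R"]) auto
  qed
  have "cover_count s A \<le> (\<Sum>y\<in>Y'. cover_count s (ball y \<sigma>))"
    using cover_num_UN_le_sum[OF \<open>finite Y'\<close> \<open>A \<subseteq> (\<Union>y\<in>Y'. ball y \<sigma>)\<close>] by simp
  also have "\<dots> \<le> (\<Sum>y\<in>Y'. ennreal c * cover_count s (ball x \<sigma>))"
    using near by (rule sum_mono)
  also have "\<dots> = of_nat (card Y') * ennreal c * cover_count s (ball x \<sigma>)"
    by (simp add: mult.assoc)
  also have "\<dots> \<le> of_nat (card Y) * ennreal c * cover_count s (ball x \<sigma>)"
    using \<open>card Y' \<le> card Y\<close> by (intro mult_right_mono) auto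
  finally show ?thesis .
qed

lemma M_ge_1: "1 \<le> M"
proof -
  have "1 \<le> cover_num (\<delta>/2/6) (cball x (\<delta>/2))"
    using delta_pos by (intro cover_num_ge_1) simp
  then have "1 \<le> cover_count (\<delta>/2/6) (cball x (\<delta>/2))"
    by (metis ennreal_of_enat_1 ennreal_of_enat_le_iff)
  also have "\<dots> \<le> ennreal M"
    using small_ball_bound[of "\<delta>/2"] delta_pos by simp
  finally have "ennreal 1 \<le> ennreal M" by simp
  then show ?thesis by (auto simp: ennreal_le_iff2)
qed

lemma cover_count_ball_le_M:
  assumes "0 < r" "r < \<delta>" "r \<le> 6 * s"
  shows "cover_count s (ball x r) \<le> ennreal M"
proof -
  have "cover_num s (ball x r) \<le> cover_num (r/6) (ball x r)"
    using assms(3) by (intro cover_num_antimono) simp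
  also have "\<dots> \<le> cover_num (r/6) (cball x r)"
    by (intro cover_num_mono ball_subset_cball)
  finally have "cover_count s (ball x r) \<le> cover_count (r/6) (cball x r)" by simp
  also have "\<dots> \<le> ennreal M" using small_ball_bound assms by simp
  finally show ?thesis .
qed

lemma cover_count_ball_le_sixth:
  assumes "0 < r" "r < \<delta>" "0 < s" "6 * s \<le> r"
  shows "cover_count s (ball x r) \<le> ennreal M * ennreal c * cover_count s (ball x (r/6))"
proof -
  have "cover_num (r/6) (cball x r) \<noteq> \<infinity>"
    using le_less_trans[OF small_ball_bound[OF assms(1,2)] ennreal_less_top]
    by (simp add: ennreal_of_enat_less_top_iff)
  then obtain Y where Y: "finite Y" "cball x r \<subseteq> (\<Union>y\<in>Y. ball y (r/6))"
    "enat (card Y) = cover_num (r/6) (cball x r)"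
    by (rule cover_num_attained)
  have "cover_count s (ball x r) \<le> of_nat (card Y) * ennreal c * cover_count s (ball x (r/6))"
    using assms by (intro cover_count_le_card_mult[OF subset_refl Y(1) order_trans[OF ball_subset_cball Y(2)]]) simp_all
  also have "\<dots> \<le> ennreal M * ennreal c * cover_count s (ball x (r/6))"
    using small_ball_bound[OF assms(1,2)] Y(3)[symmetric] by (intro mult_right_mono) auto
  finally show ?thesis .
qed

lemma cover_num_ball_finite:
  assumes "0 < r" "r < \<delta>" "0 < s"
  shows "cover_num s (ball x r) \<noteq> \<infinity>"
proof -
  have bounded: "cover_num s (ball x r) \<noteq> \<infinity>" if "0 < r" "r < \<delta>" "r \<le> 6 * s" for r
    using le_less_trans[OF cover_count_ball_le_M[OF that] ennreal_less_top]
    by (simp add: ennreal_of_enat_less_top_iff)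
  obtain n where "r / s < 6 ^ n" using real_arch_pow[of 6 "r / s"] by auto
  then have "r \<le> 6 ^ n * s" using assms(3) by (simp add: field_simps)
  then show ?thesis using assms(1,2)
  proof (induction n arbitrary: r)
    case 0
    then show ?case using bounded assms(3) by simp
  next
    case (Suc n)
    show ?case
    proof (cases "r \<le> 6 * s")
      case True
      then show ?thesis using bounded Suc.prems by simp
    next
      case False
      then have "cover_num s (ball x (r/6)) \<noteq> \<infinity>"
        using Suc by auto
      then have "ennreal M * ennreal c * cover_count s (ball x (r/6)) < top"
        by (simp add: ennreal_mult_less_top ennreal_of_enat_less_top_iff)
      then have "cover_count s (ball x r) < top"
        using cover_count_ball_le_sixth[of r s] Suc.prems False assms(3) by simp
      then show ?thesis by (simp add: ennreal_of_enat_less_top_iff)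
    qed
  qed
qed

lemma cover_count_submult:
  assumes "0 < s2" "s2 \<le> s1" "s1 \<le> R" "R < \<delta>"
  shows "cover_count s2 (ball x R) \<le> cover_count s1 (ball x R) * ennreal c * cover_count s2 (ball x s1)"
proof -
  have "cover_num s1 (ball x R) \<noteq> \<infinity>"
    using assms by (intro cover_num_ball_finite) auto
  then obtain Y where Y: "finite Y" "ball x R \<subseteq> (\<Union>y\<in>Y. ball y s1)"
    "enat (card Y) = cover_num s1 (ball x R)"
    by (rule cover_num_attained)
  have "cover_count s2 (ball x R) \<le> of_nat (card Y) * ennreal c * cover_count s2 (ball x s1)"
    using assms by (intro cover_count_le_card_mult[OF subset_refl Y(1,2)]) simp_all
  also have "of_nat (card Y) = cover_count s1 (ball x R)"
    using Y(3) by (metis ennreal_of_enat_enat)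
  finally show ?thesis .
qed

lemma card_mult_cover_count_le:
  assumes "0 < s2" "2 * s2 \<le> s1" "6 * s1 \<le> R" "R < \<delta>"
    and "finite P" "P \<subseteq> ball x (R/2)" "pairwise (\<lambda>p q. 3 * s1 \<le> dist p q) P"
  shows "of_nat (card P) * cover_count s2 (ball x s1) \<le> ennreal c * cover_count s2 (ball x R)"
proof -
  have inside: "ball p s1 \<subseteq> ball x R" if "p \<in> P" for p
  proof
    fix w assume "w \<in> ball p s1"
    moreover have "dist x p < R/2" using that assms(6) by auto
    ultimately show "w \<in> ball x R" using assms(1-3) dist_triangle[of x w p] by auto
  qed
  have far: "2 * s2 \<le> dist u v"
    if "p \<in> P" "q \<in> P" "p \<noteq> q" "u \<in> ball p s1" "v \<in> ball q s1" for p q u v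
    using assms(2) pairwiseD[OF assms(7) that(1-3)] that(4,5)
      dist_triangle[of p q u] dist_triangle[of u q v] dist_commute[of v q] by simp
  have "of_nat (card P) * cover_count s2 (ball x s1) = (\<Sum>p\<in>P. cover_count s2 (ball x s1))"
    by simp
  also have "\<dots> \<le> (\<Sum>p\<in>P. ennreal c * cover_count s2 (ball p s1))"
  proof (rule sum_mono)
    fix p assume "p \<in> P"
    then show "cover_count s2 (ball x s1) \<le> ennreal c * cover_count s2 (ball p s1)"
      using assms by (intro homogeneous_ball[where r=R]) auto
  qed
  also have "\<dots> = ennreal c * (\<Sum>p\<in>P. cover_count s2 (ball p s1))"
    by (simp only: sum_distrib_left)
  also have "\<dots> \<le> ennreal c * cover_count s2 (ball x R)"
    using sum_cover_num_separated_le[OF assms(5) inside far] by (intro mult_left_mono) auto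
  finally show ?thesis .
qed

lemma cover_count_supermult_separated_scales:
  assumes "0 < s2" "2 * s2 \<le> s1" "6 * s1 \<le> R" "R < \<delta>"
  shows "cover_count s1 (ball x R) * cover_count s2 (ball x s1)
    \<le> ennreal (M^2 * c^3) * cover_count s2 (ball x R)"
proof -
  have net_finite: "cover_num (3 * s1 / 2) (ball x (R/2)) \<noteq> \<infinity>"
    using assms by (intro cover_num_ball_finite) auto
  obtain P where P: "finite P" "P \<subseteq> ball x (R/2)"
    "pairwise (\<lambda>p q. 3 * s1 \<le> dist p q) P" "ball x (R/2) \<subseteq> (\<Union>p\<in>P. ball p (3 * s1))"
    using separated_net_exists[OF net_finite] .
  have "cover_count s1 (ball x R) \<le> ennreal M * ennreal c * cover_count s1 (ball x (R/6))"
    using assms by (intro cover_count_ball_le_sixth) auto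
  also have "\<dots> \<le> ennreal M * ennreal c * cover_count s1 (ball x (R/2))"
    using assms by (intro mult_left_mono) (auto simp: cover_num_mono subset_ball)
  also have "\<dots> \<le> ennreal M * ennreal c * (of_nat (card P) * ennreal c * cover_count s1 (ball x (3 * s1)))"
    using assms by (intro mult_left_mono cover_count_le_card_mult[OF subset_refl P(1,4)]) auto
  also have "\<dots> \<le> ennreal M * ennreal c * (of_nat (card P) * ennreal c * ennreal M)"
    using assms by (intro mult_left_mono cover_count_ball_le_M) auto
  also have "\<dots> = ennreal (M^2 * c^2) * of_nat (card P)"
    using M_ge_1 c_ge_1 by (simp add: ennreal_mult' power2_eq_square mult_ac)
  finally have first: "cover_count s1 (ball x R) \<le> ennreal (M^2 * c^2) * of_nat (card P)" .
  have "cover_count s1 (ball x R) * cover_count s2 (ball x s1)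
      \<le> ennreal (M^2 * c^2) * (of_nat (card P) * cover_count s2 (ball x s1))"
    using mult_right_mono[OF first] by (simp add: mult.assoc)
  also have "\<dots> \<le> ennreal (M^2 * c^2) * (ennreal c * cover_count s2 (ball x R))"
    using card_mult_cover_count_le[OF assms P(1-3)] by (rule mult_left_mono) simp
  also have "\<dots> = ennreal (M^2 * c^3) * cover_count s2 (ball x R)"
    using M_ge_1 c_ge_1 by (simp add: ennreal_mult' power_eq_if mult_ac)
  finally show ?thesis .
qed

lemma cover_count_supermult:
  assumes "0 < s2" "s2 \<le> s1" "s1 \<le> R" "R < \<delta>"
  shows "cover_count s1 (ball x R) * cover_count s2 (ball x s1)
    \<le> ennreal (M^2 * c^3) * cover_count s2 (ball x R)"
proof -
  have "M * 1 \<le> M * (M * c^3)"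
    using M_ge_1 c_ge_1 by (intro mult_left_mono) (simp_all add: mult_ge1_I)
  then have M_le: "ennreal M \<le> ennreal (M^2 * c^3)"
    by (intro ennreal_leI) (simp add: power2_eq_square mult.assoc)
  consider "R < 6 * s1" | "s1 < 2 * s2" | "6 * s1 \<le> R" "2 * s2 \<le> s1" by linarith
  then show ?thesis
  proof cases
    case 1
    have "cover_count s1 (ball x R) \<le> ennreal M"
      using assms 1 by (intro cover_count_ball_le_M) auto
    moreover have "cover_count s2 (ball x s1) \<le> cover_count s2 (ball x R)"
      using assms by (simp add: cover_num_mono subset_ball)
    ultimately have "cover_count s1 (ball x R) * cover_count s2 (ball x s1) \<le> ennreal M * cover_count s2 (ball x R)"
      by (rule mult_mono) auto
    also have "\<dots> \<le> ennreal (M^2 * c^3) * cover_count s2 (ball x R)"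
      using M_le by (rule mult_right_mono) simp
    finally show ?thesis .
  next
    case 2
    have "cover_count s1 (ball x R) \<le> cover_count s2 (ball x R)"
      using assms by (simp add: cover_num_antimono)
    moreover have "cover_count s2 (ball x s1) \<le> ennreal M"
      using assms 2 by (intro cover_count_ball_le_M) auto
    ultimately have "cover_count s1 (ball x R) * cover_count s2 (ball x s1) \<le> cover_count s2 (ball x R) * ennreal M"
      by (rule mult_mono) auto
    also have "\<dots> \<le> ennreal (M^2 * c^3) * cover_count s2 (ball x R)"
      using M_le by (subst mult.commute) (rule mult_right_mono, simp_all)
    finally show ?thesis .
  next
    case 3
    then show ?thesis using assms by (intro cover_count_supermult_separated_scales) auto
  qed
qed

lemma cover_size_ball:
  assumes "0 < s" "0 < r" "r < \<delta>"
  shows "cover_count s (ball x r) = ennreal (cover_size s (ball x r))" "1 \<le> cover_size s (ball x r)"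
proof -
  have finite: "cover_num s (ball x r) \<noteq> \<infinity>"
    using assms by (intro cover_num_ball_finite)
  then show "cover_count s (ball x r) = ennreal (cover_size s (ball x r))"
    unfolding cover_size_def by (rule ennreal_of_enat_eq_ennreal_the_enat)
  have "1 \<le> cover_num s (ball x r)"
    using assms by (intro cover_num_ge_1) simp
  with finite show "1 \<le> cover_size s (ball x r)"
    unfolding cover_size_def by (cases "cover_num s (ball x r)") (auto simp: one_enat_def)
qed

lemma abs_ln_cover_size_le:
  assumes "0 < s2" "s2 \<le> s1" "s1 \<le> R" "R < \<delta>"
  shows "\<bar>ln (cover_size s2 (ball x R)) - ln (cover_size s2 (ball x s1)) - ln (cover_size s1 (ball x R))\<bar>
    \<le> ln c + ln (M^2 * c^3)"
proof -
  let ?n1 = "cover_size s1 (ball x R)" and ?n2 = "cover_size s2 (ball x s1)"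
    and ?n3 = "cover_size s2 (ball x R)"
  have n: "cover_count s1 (ball x R) = ennreal ?n1" "1 \<le> ?n1"
    "cover_count s2 (ball x s1) = ennreal ?n2" "1 \<le> ?n2"
    "cover_count s2 (ball x R) = ennreal ?n3" "1 \<le> ?n3"
    using assms by (auto intro!: cover_size_ball)
  have "?n3 \<le> c * (?n1 * ?n2)"
    using cover_count_submult[OF assms] n c_ge_1 by (simp add: ennreal_mult'[symmetric] mult_ac)
  moreover have "?n1 * ?n2 \<le> M^2 * c^3 * ?n3"
    using cover_count_supermult[OF assms] n M_ge_1 c_ge_1 by (simp add: ennreal_mult'[symmetric] mult_ac)
  moreover have "1 \<le> M^2 * c^3"
    using M_ge_1 c_ge_1 by (simp add: mult_ge1_I)
  ultimately have "\<bar>ln ?n3 - ln (?n1 * ?n2)\<bar> \<le> ln c + ln (M^2 * c^3)"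
    using n c_ge_1 by (intro abs_ln_diff_le) (auto intro: mult_pos_pos)
  then show ?thesis
    using n by (simp add: ln_mult)
qed

lemma dg_fun_bounded:
  assumes "- ln \<delta> < t" "0 < h" "0 < k"
  shows "\<bar>dg_fun x t h k\<bar> \<le> ln c + ln (M^2 * c^3)"
proof -
  have "exp (-t) < exp (ln \<delta>)" using assms(1) by simp
  then have "exp (-t) < \<delta>" using delta_pos by simp
  then show ?thesis
    using abs_ln_cover_size_le[of "exp (-(t+h+k))" "exp (-(t+h))" "exp (-t)"] assms(2,3)
    by (simp add: dg_fun_def g_fun_def cover_size_def add.assoc)
qed

end

theorem proposition4p5:
  fixes x :: "'a::metric_space"
  assumes a: "\<exists>c a. c \<ge> 1 \<and> 0 < a \<and> a \<le> 1 \<and>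
      (\<forall>r l m y z. 0 < r \<and> r \<le> a \<and> 0 < l \<and> l \<le> 1 \<and> 0 < m \<and> m \<le> 1 \<and>
         y \<in> ball x r \<and> z \<in> ball x r \<longrightarrow>
         ennreal_of_enat (cover_num (l*m*r) (ball y (l*r)))
           \<le> ennreal c * ennreal_of_enat (cover_num (l*m*r) (ball z (l*r))))"
    and b: "\<forall>l>0. Limsup (at_right 0) (\<lambda>r. ennreal_of_enat (cover_num (l*r) (cball x r))) < \<infinity>"
  shows "\<exists>t0 B. \<forall>t h k. t > t0 \<and> h > 0 \<and> k > 0 \<longrightarrow> \<bar>dg_fun x t h k\<bar> \<le> B"
proof -
  from a obtain c a where "1 \<le> c" "0 < a" and homogeneous:
    "\<And>r l m y z. 0 < r \<Longrightarrow> r \<le> a \<Longrightarrow> 0 < l \<Longrightarrow> l \<le> 1 \<Longrightarrow> 0 < m \<Longrightarrow> m \<le> 1 \<Longrightarrow>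
      y \<in> ball x r \<Longrightarrow> z \<in> ball x r \<Longrightarrow>
      cover_count (l*m*r) (ball y (l*r)) \<le> ennreal c * cover_count (l*m*r) (ball z (l*r))"
    by blast
  have "Limsup (at_right 0) (\<lambda>r. cover_count (r/6) (cball x r)) < \<infinity>"
    using b[rule_format, of "1/6"] by simp
  then obtain M where "eventually (\<lambda>r. cover_count (r/6) (cball x r) \<le> ennreal M) (at_right 0)"
    by (rule Limsup_less_top_imp_eventually_bounded)
  then obtain \<delta>0 where "0 < \<delta>0" and small_ball_bound:
    "\<And>r. 0 < r \<Longrightarrow> r < \<delta>0 \<Longrightarrow> cover_count (r/6) (cball x r) \<le> ennreal M"
    by (auto simp: eventually_at_right_field)
  interpret homogeneous_covering x c M "min \<delta>0 (a/2)"
    using \<open>1 \<le> c\<close> \<open>0 < a\<close> \<open>0 < \<delta>0\<close> homogeneous small_ball_bound by unfold_locales auto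
  show ?thesis
    using dg_fun_bounded by blast
qed

end
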